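(* Let $M=(S,\mathrm{Act},P)$ be an MDP, $T\subseteq S$, $\mathrm{rew}\colon S\to\mathbb{R}_{\ge0}$. Let $(x,r,\sigma)$ with $x\in[0,\infty]^S$, $r\in\mathbb{N}_\infty^S$, and $\sigma$ a strategy satisfy: (1) $D^{\sigma}(r)\le r$; (2) $E^{\sigma}(x)\le x$; (3) for all $s\in S$, $x(s)<\infty$ implies $r(s)<\infty$ (inequalities pointwise). Then for all $s\in S$: $\mathbb{E}^{\min}_s(\Diamond T)\le\mathbb{E}^{\sigma}_s(\Diamond T)\le x(s)$.
   Context: An MDP is a tuple $M=(S,\mathrm{Act},P)$ with $S$ finite, $\mathrm{Act}$ finite, $P\colon S\times\mathrm{Act}\times S\to[0,1]$ with $\sum_{s'}P(s,a,s')\in\{0,1\}$; $\mathrm{Act}(s)=\{a\mid\sum_{s'}P(s,a,s')=1\}$ is nonempty for all $s$; $\mathrm{Post}(s,a)=\{s'\mid P(s,a,s')>0\}$. A strategy is $\sigma\colon S\to\mathrm{Act}$ with $\sigma(s)\in\mathrm{Act}(s)$, inducing a Markov chain with transitions $P(s,\sigma(s),\cdot)$. For an infinite path $s_0s_1\ldots$, the accumulated reward is $\sum_{k=0}^{n-1}\mathrm{rew}(s_k)$ with $n=\min\{i\mid s_i\in T\}$ if $T$ is visited, and $\infty$ otherwise; $\mathbb{E}^\sigma_s(\Diamond T)$ is its expectation under $\sigma$ from $s$, and $\mathbb{E}^{\min}_s(\Diamond T)=\min_\sigma\mathbb{E}^\sigma_s(\Diamond T)$. $E^{\sigma}(x)(s)=0$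 for $s\in T$ and $\mathrm{rew}(s)+\sum_{s'\in\mathrm{Post}(s,\sigma(s))}P(s,\sigma(s),s')x(s')$ for $s\notin T$, with $p\cdot\infty=\infty$ for $p>0$, $a+\infty=\infty$. $\mathbb{N}_\infty=\mathbb{N}\cup\{\infty\}$, $1+\infty=\infty$; $D^{\sigma}(r)(s)=0$ for $s\in T$ and $1+\min_{s'\in\mathrm{Post}(s,\sigma(s))}r(s')$ for $s\notin T$. *)

theory Defs
  imports "HOL-Analysis.Analysis" "HOL-Library.Extended_Nat" "HOL-Library.Extended_Nonnegative_Real"
begin

definition Act :: "('s::finite \<Rightarrow> 'a \<Rightarrow> 's \<Rightarrow> real) \<Rightarrow> 's \<Rightarrow> 'a set" where
  "Act P s = {a. (\<Sum>s'\<in>UNIV. P s a s') = 1}"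

definition Post :: "('s::finite \<Rightarrow> 'a \<Rightarrow> 's \<Rightarrow> real) \<Rightarrow> 's \<Rightarrow> 'a \<Rightarrow> 's set" where
  "Post P s a = {s'. P s a s' > 0}"

definition is_MDP :: "('s::finite \<Rightarrow> 'a::finite \<Rightarrow> 's \<Rightarrow> real) \<Rightarrow> bool" where
  "is_MDP P \<longleftrightarrow> (\<forall>s a s'. 0 \<le> P s a s' \<and> P s a s' \<le> 1)
     \<and> (\<forall>s a. (\<Sum>s'\<in>UNIV. P s a s') \<in> {0, 1})
     \<and> (\<forall>s. Act P s \<noteq> {})"

definition is_strategy :: "('s::finite \<Rightarrow> 'a \<Rightarrow> 's \<Rightarrow> real) \<Rightarrow> ('s \<Rightarrow> 'a) \<Rightarrow> bool" where
  "is_strategy P \<sigma> \<longleftrightarrow> (\<forall>s. \<sigma> s \<in> Act P s)"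

definition E_op :: "('s::finite \<Rightarrow> 'a \<Rightarrow> 's \<Rightarrow> real) \<Rightarrow> 's set \<Rightarrow> ('s \<Rightarrow> real) \<Rightarrow> ('s \<Rightarrow> 'a)
    \<Rightarrow> ('s \<Rightarrow> ennreal) \<Rightarrow> 's \<Rightarrow> ennreal" where
  "E_op P T rew \<sigma> x s = (if s \<in> T then 0
     else ennreal (rew s) + (\<Sum>s'\<in>Post P s (\<sigma> s). ennreal (P s (\<sigma> s) s') * x s'))"

definition D_op :: "('s::finite \<Rightarrow> 'a \<Rightarrow> 's \<Rightarrow> real) \<Rightarrow> 's set \<Rightarrow> ('s \<Rightarrow> 'a)
    \<Rightarrow> ('s \<Rightarrow> enat) \<Rightarrow> 's \<Rightarrow> enat" where
  "D_op P T \<sigma> r s = (if s \<in> T then 0 else 1 + Min (r ` Post P s (\<sigma> s)))"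

fun path_prob :: "('s \<Rightarrow> 'a \<Rightarrow> 's \<Rightarrow> real) \<Rightarrow> ('s \<Rightarrow> 'a) \<Rightarrow> 's \<Rightarrow> 's list \<Rightarrow> real" where
  "path_prob P \<sigma> s [] = 1"
| "path_prob P \<sigma> s (t # ts) = P s (\<sigma> s) t * path_prob P \<sigma> t ts"

text \<open>Continuations xs = t1...tn such that s t1 ... tn visits T for the first time at tn
  (for s not in T).\<close>
definition first_hit :: "'s set \<Rightarrow> 's list set" where
  "first_hit T = {xs. xs \<noteq> [] \<and> last xs \<in> T \<and> (\<forall>y\<in>set (butlast xs). y \<notin> T)}"

definition path_rew :: "('s \<Rightarrow> real) \<Rightarrow> 's \<Rightarrow> 's list \<Rightarrow> real" where
  "path_rew rew s xs = rew s + sum_list (map rew (butlast xs))"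

text \<open>Probability of eventually reaching T from s under sigma (s not in T): sum over the
  disjoint cylinder sets of first-hitting prefixes.\<close>
definition reach_prob :: "('s \<Rightarrow> 'a \<Rightarrow> 's \<Rightarrow> real) \<Rightarrow> 's set \<Rightarrow> ('s \<Rightarrow> 'a) \<Rightarrow> 's \<Rightarrow> ennreal" where
  "reach_prob P T \<sigma> s = (\<integral>\<^sup>+ xs. ennreal (path_prob P \<sigma> s xs) \<partial>count_space (first_hit T))"

text \<open>Expected accumulated reward E^sigma_s(<> T): the accumulated reward is a random
  variable on infinite paths that is constant on each first-hitting cylinder and equals
  \<infinity> on paths never visiting T; hence its expectation is the sum over the first-hitting
  prefixes plus \<infinity> * Pr(never reach T).\<close>
definition exp_rew :: "('s \<Rightarrow> 'a \<Rightarrow> 's \<Rightarrow> real) \<Rightarrow> 's set \<Rightarrow> ('s \<Rightarrow> real) \<Rightarrow> ('s \<Rightarrow> 'a)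
    \<Rightarrow> 's \<Rightarrow> ennreal" where
  "exp_rew P T rew \<sigma> s =
     (if s \<in> T then 0
      else if reach_prob P T \<sigma> s < 1 then \<infinity>
      else (\<integral>\<^sup>+ xs. ennreal (path_prob P \<sigma> s xs) * ennreal (path_rew rew s xs)
              \<partial>count_space (first_hit T)))"

definition exp_rew_min :: "('s::finite \<Rightarrow> 'a::finite \<Rightarrow> 's \<Rightarrow> real) \<Rightarrow> 's set \<Rightarrow> ('s \<Rightarrow> real)
    \<Rightarrow> 's \<Rightarrow> ennreal" where
  "exp_rew_min P T rew s = Min {exp_rew P T rew \<sigma> s | \<sigma>. is_strategy P \<sigma>}"

end

theory Submission
  imports Defs
begin

(* Cut off at length n, the first-hitting paths give partial reach probabilities R_n and
   partial expected rewards W_n with W_(n+1) <= rew + P W_n outside T, so W_n <= x by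
   induction because x is superharmonic (E^sigma x <= x).  Their supremum is the expected
   reward once T is reached almost surely, and this holds wherever x < \<infinity>: the limit
   q = sup_n R_n satisfies q = P q outside T, and the states with x < \<infinity> are closed under
   successors outside T.  If m, the least value of q on them, were < 1, a state of value m and
   least rank r would by D^sigma r <= r have a successor of smaller rank, which lies in T or
   has q > m; so q there, a convex combination of successor values >= m, would exceed m. *)

definition first_hit_upto :: "'s set \<Rightarrow> nat \<Rightarrow> 's list set" where
  "first_hit_upto T n = {xs \<in> first_hit T. length xs \<le> n}"

lemma finite_first_hit_upto: "finite (first_hit_upto (T::'s::finite set) n)"
proof -
  have "first_hit_upto T n \<subseteq> {xs. set xs \<subseteq> UNIV \<and> length xs \<le> n}"
    by (auto simp: first_hit_upto_def)
  then show ?thesis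
    using finite_lists_length_le[of "UNIV::'s set" n] finite_subset by auto
qed

lemma first_hit_upto_0 [simp]: "first_hit_upto T 0 = {}"
  by (auto simp: first_hit_upto_def first_hit_def)

lemma first_hit_upto_Suc:
  "first_hit_upto T (Suc n) =
     (\<lambda>t. [t]) ` T \<union> (\<lambda>(t, ts). t # ts) ` (Sigma (-T) (\<lambda>_. first_hit_upto T n))"
proof (intro set_eqI iffI)
  fix xs assume "xs \<in> first_hit_upto T (Suc n)"
  then obtain t ts where xs: "xs = t # ts" and "last xs \<in> T"
      "\<forall>y\<in>set (butlast xs). y \<notin> T" "length ts \<le> n"
    by (cases xs) (auto simp: first_hit_upto_def first_hit_def)
  then show "xs \<in> (\<lambda>t. [t]) ` T \<union> (\<lambda>(t, ts). t # ts) ` (Sigma (-T) (\<lambda>_. first_hit_upto T n))"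
    by (cases "ts = []")
      (auto simp: first_hit_upto_def first_hit_def intro!: image_eqI[where x="(t, ts)"])
qed (auto simp: first_hit_upto_def first_hit_def)

lemma sum_first_hit_upto_Suc:
  fixes g :: "'s::finite list \<Rightarrow> 'b::comm_monoid_add"
  shows "(\<Sum>xs\<in>first_hit_upto T (Suc n). g xs) =
           (\<Sum>t\<in>T. g [t]) + (\<Sum>t\<in>-T. \<Sum>ts\<in>first_hit_upto T n. g (t # ts))"
proof -
  let ?A = "Sigma (-T) (\<lambda>_. first_hit_upto T n)"
  have disjoint: "(\<lambda>t. [t]) ` T \<inter> (\<lambda>(t, ts). t # ts) ` ?A = {}"
    by (auto simp: first_hit_upto_def first_hit_def)
  have "(\<Sum>xs\<in>first_hit_upto T (Suc n). g xs) =
          sum g ((\<lambda>t. [t]) ` T) + sum g ((\<lambda>(t, ts). t # ts) ` ?A)"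
    unfolding first_hit_upto_Suc
    by (rule sum.union_disjoint) (auto simp: finite_first_hit_upto disjoint)
  also have "sum g ((\<lambda>t. [t]) ` T) = (\<Sum>t\<in>T. g [t])"
    by (subst sum.reindex) (auto simp: inj_on_def)
  also have "sum g ((\<lambda>(t, ts). t # ts) ` ?A) = (\<Sum>(t, ts)\<in>?A. g (t # ts))"
    by (subst sum.reindex) (auto simp: inj_on_def intro!: sum.cong)
  also have "\<dots> = (\<Sum>t\<in>-T. \<Sum>ts\<in>first_hit_upto T n. g (t # ts))"
    by (rule sum.Sigma[symmetric]) (auto simp: finite_first_hit_upto)
  finally show ?thesis .
qed

lemma nn_integral_first_hit_eq_SUP:
  fixes f :: "'s::finite list \<Rightarrow> ennreal"
  shows "(\<integral>\<^sup>+xs. f xs \<partial>count_space (first_hit T)) = (SUP n. \<Sum>xs\<in>first_hit_upto T n. f xs)"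
proof -
  let ?f = "\<lambda>n xs. f xs * indicator {xs. length xs \<le> n} xs"
  have "f xs = (SUP n. ?f n xs)" for xs
    by (rule antisym, rule SUP_upper2[where i="length xs"])
      (auto intro!: SUP_least simp: indicator_def)
  then have "(\<integral>\<^sup>+xs. f xs \<partial>count_space (first_hit T)) =
               (\<integral>\<^sup>+xs. (SUP n. ?f n xs) \<partial>count_space (first_hit T))"
    by simp
  also have "\<dots> = (SUP n. \<integral>\<^sup>+xs. ?f n xs \<partial>count_space (first_hit T))"
    by (rule nn_integral_monotone_convergence_SUP)
      (auto simp: incseq_def le_fun_def indicator_def)
  also have "\<dots> = (SUP n. \<Sum>xs\<in>first_hit_upto T n. f xs)"
    by (intro SUP_cong refl, subst nn_integral_count_space'[where A="first_hit_upto T n" for n])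
      (use finite_first_hit_upto in \<open>auto simp: first_hit_upto_def intro!: sum.cong\<close>)
  finally show ?thesis .
qed

definition reach_prob_upto ::
    "('s::finite \<Rightarrow> 'a \<Rightarrow> 's \<Rightarrow> real) \<Rightarrow> 's set \<Rightarrow> ('s \<Rightarrow> 'a) \<Rightarrow> nat \<Rightarrow> 's \<Rightarrow> real" where
  "reach_prob_upto P T \<sigma> n s = (\<Sum>xs\<in>first_hit_upto T n. path_prob P \<sigma> s xs)"

definition exp_rew_upto :: "('s::finite \<Rightarrow> 'a \<Rightarrow> 's \<Rightarrow> real) \<Rightarrow> 's set \<Rightarrow> ('s \<Rightarrow> real)
    \<Rightarrow> ('s \<Rightarrow> 'a) \<Rightarrow> nat \<Rightarrow> 's \<Rightarrow> real" where
  "exp_rew_upto P T rew \<sigma> n s =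
     (\<Sum>xs\<in>first_hit_upto T n. path_prob P \<sigma> s xs * path_rew rew s xs)"

definition reach_prob_real ::
    "('s::finite \<Rightarrow> 'a \<Rightarrow> 's \<Rightarrow> real) \<Rightarrow> 's set \<Rightarrow> ('s \<Rightarrow> 'a) \<Rightarrow> 's \<Rightarrow> real" where
  "reach_prob_real P T \<sigma> s = (SUP n. reach_prob_upto P T \<sigma> n s)"

lemma reach_prob_upto_Suc:
  "reach_prob_upto P T \<sigma> (Suc n) s =
     (\<Sum>t\<in>T. P s (\<sigma> s) t) + (\<Sum>t\<in>-T. P s (\<sigma> s) t * reach_prob_upto P T \<sigma> n t)"
  unfolding reach_prob_upto_def sum_first_hit_upto_Suc by (simp add: sum_distrib_left)

lemma exp_rew_upto_Suc:
  "exp_rew_upto P T rew \<sigma> (Suc n) s =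
     rew s * reach_prob_upto P T \<sigma> (Suc n) s + (\<Sum>t\<in>-T. P s (\<sigma> s) t * exp_rew_upto P T rew \<sigma> n t)"
proof -
  have "path_rew rew s (t # ts) = rew s + (if ts = [] then 0 else path_rew rew t ts)" for t ts
    by (cases ts) (auto simp: path_rew_def)
  then have "exp_rew_upto P T rew \<sigma> (Suc n) s = (\<Sum>t\<in>T. P s (\<sigma> s) t * rew s) +
     (\<Sum>t\<in>-T. \<Sum>ts\<in>first_hit_upto T n.
        P s (\<sigma> s) t * path_prob P \<sigma> t ts * (rew s + path_rew rew t ts))"
    unfolding exp_rew_upto_def sum_first_hit_upto_Suc
    by (auto intro!: sum.cong simp: first_hit_upto_def first_hit_def)
  then show ?thesis
    unfolding reach_prob_upto_Suc exp_rew_upto_def reach_prob_upto_def[of P T \<sigma> n]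
    by (simp add: algebra_simps sum_distrib_left sum_distrib_right sum.distrib)
qed

lemma sum_add_sum_Compl:
  fixes g :: "'s::finite \<Rightarrow> 'b::comm_monoid_add"
  shows "sum g A + sum g (-A) = sum g UNIV"
  using sum.subset_diff[of A UNIV g] by (simp add: Compl_eq_Diff_UNIV add.commute)

lemma sum_weighted_gt_lower_bound:
  fixes p v :: "'s::finite \<Rightarrow> real"
  assumes "\<And>t. 0 \<le> p t" "(\<Sum>t\<in>UNIV. p t) = 1"
    and "\<And>t. 0 < p t \<Longrightarrow> m \<le> v t" "0 < p t0" "m < v t0"
  shows "m < (\<Sum>t\<in>UNIV. p t * v t)"
proof -
  have "p t * m \<le> p t * v t" for t
    using assms(1)[of t] assms(3)[of t] by (cases "p t = 0") (auto intro: mult_left_mono)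
  moreover have "p t0 * m < p t0 * v t0"
    using assms(4,5) by simp
  ultimately have "(\<Sum>t\<in>UNIV. p t * m) < (\<Sum>t\<in>UNIV. p t * v t)"
    by (intro sum_strict_mono_ex1) auto
  moreover have "(\<Sum>t\<in>UNIV. p t * m) = m"
    using assms(2) by (simp add: sum_distrib_right[symmetric])
  ultimately show ?thesis by simp
qed

lemma superharmonic_finite_successor:
  assumes "E_op P T rew \<sigma> x s \<le> x s" "s \<notin> T" "x s < \<infinity>" "0 < P s (\<sigma> s) t"
  shows "x t < \<infinity>"
proof -
  have "ennreal (P s (\<sigma> s) t) * x t \<le> (\<Sum>t\<in>Post P s (\<sigma> s). ennreal (P s (\<sigma> s) t) * x t)"
    by (rule member_le_sum) (use assms(4) in \<open>auto simp: Post_def\<close>)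
  also have "\<dots> \<le> E_op P T rew \<sigma> x s"
    using assms(2) by (simp add: E_op_def)
  finally have "ennreal (P s (\<sigma> s) t) * x t < \<infinity>"
    using assms(1,3) by simp
  then show ?thesis
    using assms(4) by (auto simp: ennreal_mult_less_top top.not_eq_extremum)
qed

locale stochastic_strategy =
  fixes P :: "'s::finite \<Rightarrow> 'a \<Rightarrow> 's \<Rightarrow> real" and \<sigma> :: "'s \<Rightarrow> 'a"
  assumes P_nonneg: "\<And>s t. 0 \<le> P s (\<sigma> s) t"
    and P_stochastic: "\<And>s. (\<Sum>t\<in>UNIV. P s (\<sigma> s) t) = 1"
begin

lemma path_prob_nonneg: "0 \<le> path_prob P \<sigma> s xs"
  by (induction xs arbitrary: s) (auto intro!: mult_nonneg_nonneg P_nonneg)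

lemma Post_nonempty: "Post P s (\<sigma> s) \<noteq> {}"
proof
  assume "Post P s (\<sigma> s) = {}"
  then have "P s (\<sigma> s) t = 0" for t
    using P_nonneg[of s t] by (auto simp: Post_def not_less intro: antisym)
  then show False
    using P_stochastic[of s] by simp
qed

lemma reach_prob_upto_le_1: "reach_prob_upto P T \<sigma> n s \<le> 1"
proof (induction n arbitrary: s)
  case (Suc n)
  have "reach_prob_upto P T \<sigma> (Suc n) s \<le> (\<Sum>t\<in>T. P s (\<sigma> s) t) + (\<Sum>t\<in>-T. P s (\<sigma> s) t)"
    unfolding reach_prob_upto_Suc using Suc P_nonneg by (auto intro!: sum_mono mult_left_le)
  also have "\<dots> = 1"
    using P_stochastic[of s] by (simp add: sum_add_sum_Compl)
  finally show ?case .
qed (simp add: reach_prob_upto_def)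

lemma incseq_reach_prob_upto: "incseq (\<lambda>n. reach_prob_upto P T \<sigma> n s)"
  unfolding reach_prob_upto_def
  by (intro incseq_SucI sum_mono2 finite_first_hit_upto)
    (auto simp: first_hit_upto_def path_prob_nonneg)

lemma reach_prob_upto_tendsto:
  "(\<lambda>n. reach_prob_upto P T \<sigma> n s) \<longlonglongrightarrow> reach_prob_real P T \<sigma> s"
  unfolding reach_prob_real_def
  by (rule LIMSEQ_incseq_SUP)
    (auto intro!: bdd_aboveI2[where M=1] incseq_reach_prob_upto reach_prob_upto_le_1)

lemma reach_prob_real_le_1: "reach_prob_real P T \<sigma> s \<le> 1"
  unfolding reach_prob_real_def by (rule cSUP_least) (auto simp: reach_prob_upto_le_1)

lemma reach_prob_real_fixpoint:
  "reach_prob_real P T \<sigma> s =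
     (\<Sum>t\<in>UNIV. P s (\<sigma> s) t * (if t \<in> T then 1 else reach_prob_real P T \<sigma> t))"
proof -
  have "(\<lambda>n. reach_prob_upto P T \<sigma> (Suc n) s) \<longlonglongrightarrow>
          (\<Sum>t\<in>T. P s (\<sigma> s) t) + (\<Sum>t\<in>-T. P s (\<sigma> s) t * reach_prob_real P T \<sigma> t)"
    unfolding reach_prob_upto_Suc by (intro tendsto_intros reach_prob_upto_tendsto)
  then have "reach_prob_real P T \<sigma> s =
          (\<Sum>t\<in>T. P s (\<sigma> s) t) + (\<Sum>t\<in>-T. P s (\<sigma> s) t * reach_prob_real P T \<sigma> t)"
    using LIMSEQ_Suc[OF reach_prob_upto_tendsto] LIMSEQ_unique by blast
  also have "\<dots> = (\<Sum>t\<in>UNIV. P s (\<sigma> s) t * (if t \<in> T then 1 else reach_prob_real P T \<sigma> t))"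
    by (simp add: sum_add_sum_Compl[symmetric] if_distrib sum.If_cases)
  finally show ?thesis .
qed

lemma reach_prob_eq_ennreal: "reach_prob P T \<sigma> s = ennreal (reach_prob_real P T \<sigma> s)"
proof -
  have "reach_prob P T \<sigma> s = (SUP n. ennreal (reach_prob_upto P T \<sigma> n s))"
    unfolding reach_prob_def nn_integral_first_hit_eq_SUP reach_prob_upto_def
    by (intro SUP_cong refl sum_ennreal) (auto intro: path_prob_nonneg)
  moreover have "(\<lambda>n. ennreal (reach_prob_upto P T \<sigma> n s)) \<longlonglongrightarrow>
                   (SUP n. ennreal (reach_prob_upto P T \<sigma> n s))"
    using incseq_reach_prob_upto by (intro LIMSEQ_SUP) (auto simp: incseq_def intro: ennreal_leI)
  ultimately show ?thesis
    using tendsto_ennrealI[OF reach_prob_upto_tendsto] LIMSEQ_unique by metis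
qed

lemma exp_rew_eq_SUP_exp_rew_upto:
  assumes "\<And>s. 0 \<le> rew s" "s \<notin> T" "reach_prob P T \<sigma> s = 1"
  shows "exp_rew P T rew \<sigma> s = (SUP n. ennreal (exp_rew_upto P T rew \<sigma> n s))"
proof -
  have "0 \<le> path_rew rew s xs" for xs
    using assms(1) by (auto simp: path_rew_def intro!: add_nonneg_nonneg sum_list_nonneg)
  then show ?thesis
    using assms(2,3)
    unfolding exp_rew_def nn_integral_first_hit_eq_SUP exp_rew_upto_def
    by (auto intro!: SUP_cong simp: sum_ennreal ennreal_mult[symmetric] path_prob_nonneg)
qed

lemma exp_rew_upto_nonneg:
  assumes "\<And>s. 0 \<le> rew s"
  shows "0 \<le> exp_rew_upto P T rew \<sigma> n s"
  unfolding exp_rew_upto_def path_rew_def using assms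
  by (auto intro!: sum_nonneg mult_nonneg_nonneg add_nonneg_nonneg sum_list_nonneg
      path_prob_nonneg)

lemma sum_Compl_le_E_op:
  assumes "s \<notin> T"
  shows "ennreal (rew s) + (\<Sum>t\<in>-T. ennreal (P s (\<sigma> s) t) * x t) \<le> E_op P T rew \<sigma> x s"
proof -
  have "(\<Sum>t\<in>-T. ennreal (P s (\<sigma> s) t) * x t) =
          (\<Sum>t\<in>-T \<inter> Post P s (\<sigma> s). ennreal (P s (\<sigma> s) t) * x t)"
    using P_nonneg by (intro sum.mono_neutral_right) (auto simp: Post_def not_less ennreal_eq_0_iff)
  also have "\<dots> \<le> (\<Sum>t\<in>Post P s (\<sigma> s). ennreal (P s (\<sigma> s) t) * x t)"
    by (rule sum_mono2) auto
  finally show ?thesis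
    using assms by (simp add: E_op_def add_left_mono)
qed

lemma exp_rew_upto_le_superharmonic:
  assumes rew_nonneg: "\<And>s. 0 \<le> rew s" and superharmonic: "\<And>s. E_op P T rew \<sigma> x s \<le> x s"
  shows "s \<notin> T \<Longrightarrow> ennreal (exp_rew_upto P T rew \<sigma> n s) \<le> x s"
proof (induction n arbitrary: s)
  case 0
  then show ?case by (simp add: exp_rew_upto_def)
next
  case (Suc n)
  let ?W = "exp_rew_upto P T rew \<sigma> n"
  have "exp_rew_upto P T rew \<sigma> (Suc n) s \<le> rew s + (\<Sum>t\<in>-T. P s (\<sigma> s) t * ?W t)"
    unfolding exp_rew_upto_Suc
    using reach_prob_upto_le_1 rew_nonneg by (simp add: mult_left_le)
  then have "ennreal (exp_rew_upto P T rew \<sigma> (Suc n) s) \<le>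
               ennreal (rew s + (\<Sum>t\<in>-T. P s (\<sigma> s) t * ?W t))"
    by (rule ennreal_leI)
  also have "\<dots> = ennreal (rew s) + (\<Sum>t\<in>-T. ennreal (P s (\<sigma> s) t) * ennreal (?W t))"
    using rew_nonneg P_nonneg exp_rew_upto_nonneg[OF rew_nonneg]
    by (simp add: sum_nonneg ennreal_mult[symmetric] sum_ennreal)
  also have "\<dots> \<le> ennreal (rew s) + (\<Sum>t\<in>-T. ennreal (P s (\<sigma> s) t) * x t)"
    by (intro add_left_mono sum_mono mult_left_mono) (auto intro: Suc.IH)
  also have "\<dots> \<le> E_op P T rew \<sigma> x s"
    using Suc.prems by (rule sum_Compl_le_E_op)
  also have "\<dots> \<le> x s"
    by (rule superharmonic)
  finally show ?case .
qed

lemma ranking_successor_less: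
  assumes "D_op P T \<sigma> r s \<le> r s" "s \<notin> T" "r s < \<infinity>"
  obtains t where "0 < P s (\<sigma> s) t" "r t < r s"
proof -
  have "Min (r ` Post P s (\<sigma> s)) \<in> r ` Post P s (\<sigma> s)"
    using Post_nonempty by (intro Min_in) auto
  then obtain t where t: "t \<in> Post P s (\<sigma> s)" "r t = Min (r ` Post P s (\<sigma> s))"
    by auto
  have "1 + r t \<le> r s"
    using assms(1,2) t by (simp add: D_op_def)
  then have "r t < r s"
    using assms(3) by (cases "r t"; cases "r s") (auto simp: one_enat_def)
  then show ?thesis
    using that t by (simp add: Post_def)
qed

lemma reach_prob_real_eq_1:
  assumes rank: "\<And>s. D_op P T \<sigma> r s \<le> r s"
    and superharmonic: "\<And>s. E_op P T rew \<sigma> x s \<le> x s"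
    and finite_rank: "\<And>s. x s < \<infinity> \<Longrightarrow> r s < \<infinity>"
    and "s \<notin> T" "x s < \<infinity>"
  shows "reach_prob_real P T \<sigma> s = 1"
proof (rule ccontr)
  let ?q = "reach_prob_real P T \<sigma>"
  define X where "X = {s. s \<notin> T \<and> x s < \<infinity>}"
  define m where "m = Min (?q ` X)"
  assume "?q s \<noteq> 1"
  then have "?q s < 1"
    using reach_prob_real_le_1[of T s] by simp
  have "s \<in> X"
    using assms(4,5) by (simp add: X_def)
  have m_le: "m \<le> ?q t" if "t \<in> X" for t
    using that by (simp add: m_def)
  have "m \<in> ?q ` X"
    unfolding m_def using \<open>s \<in> X\<close> by (intro Min_in) auto
  have "m < 1"
    using m_le[OF \<open>s \<in> X\<close>] \<open>?q s < 1\<close> by simp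
  obtain s0 where s0: "s0 \<in> X" "?q s0 = m"
    and s0_least: "\<And>t. t \<in> X \<Longrightarrow> ?q t = m \<Longrightarrow> r s0 \<le> r t"
    using ex_is_arg_min_if_finite[of "{t \<in> X. ?q t = m}" r] \<open>m \<in> ?q ` X\<close>
    by (auto simp: is_arg_min_linorder)
  have "s0 \<notin> T" "r s0 < \<infinity>"
    using finite_rank s0 by (auto simp: X_def)
  then obtain t0 where t0: "0 < P s0 (\<sigma> s0) t0" and "r t0 < r s0"
    using ranking_successor_less[OF rank] by blast
  have successor_in_X: "t \<in> X" if "0 < P s0 (\<sigma> s0) t" "t \<notin> T" for t
    using superharmonic_finite_successor[OF superharmonic] s0 that by (auto simp: X_def)
  have "m < (\<Sum>t\<in>UNIV. P s0 (\<sigma> s0) t * (if t \<in> T then 1 else ?q t))"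
  proof (rule sum_weighted_gt_lower_bound[OF P_nonneg P_stochastic])
    show "m \<le> (if t \<in> T then 1 else ?q t)" if "0 < P s0 (\<sigma> s0) t" for t
      using successor_in_X[OF that] m_le \<open>m < 1\<close> by auto
    show "m < (if t0 \<in> T then 1 else ?q t0)"
      using successor_in_X[OF t0] m_le s0_least \<open>m < 1\<close> \<open>r t0 < r s0\<close>
      by (fastforce simp: order_le_less)
  qed (fact t0)
  then show False
    using reach_prob_real_fixpoint[of T s0] s0 by simp
qed

end

theorem proposition10:
  fixes P :: "'s::finite \<Rightarrow> 'a::finite \<Rightarrow> 's \<Rightarrow> real"
    and T :: "'s set" and rew :: "'s \<Rightarrow> real"
    and x :: "'s \<Rightarrow> ennreal" and r :: "'s \<Rightarrow> enat" and \<sigma> :: "'s \<Rightarrow> 'a"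
  assumes "is_MDP P"
    and "\<And>s. rew s \<ge> 0"
    and "is_strategy P \<sigma>"
    and "\<And>s. D_op P T \<sigma> r s \<le> r s"
    and "\<And>s. E_op P T rew \<sigma> x s \<le> x s"
    and "\<And>s. x s < \<infinity> \<Longrightarrow> r s < \<infinity>"
  shows "\<forall>s. exp_rew_min P T rew s \<le> exp_rew P T rew \<sigma> s \<and> exp_rew P T rew \<sigma> s \<le> x s"
proof (intro allI conjI)
  fix s
  interpret stochastic_strategy P \<sigma>
    using assms(1,3) by unfold_locales (auto simp: is_MDP_def is_strategy_def Act_def)
  show "exp_rew_min P T rew s \<le> exp_rew P T rew \<sigma> s"
    unfolding exp_rew_min_def using assms(3) by (intro Min_le) auto
  show "exp_rew P T rew \<sigma> s \<le> x s"
  proof (cases "s \<in> T \<or> x s = \<infinity>")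
    case True
    then show ?thesis by (auto simp: exp_rew_def)
  next
    case False
    then have "s \<notin> T" "x s < \<infinity>"
      by (auto simp: top.not_eq_extremum)
    then have "reach_prob P T \<sigma> s = 1"
      using reach_prob_eq_ennreal reach_prob_real_eq_1[OF assms(4-6)] by simp
    then have "exp_rew P T rew \<sigma> s = (SUP n. ennreal (exp_rew_upto P T rew \<sigma> n s))"
      using exp_rew_eq_SUP_exp_rew_upto[OF assms(2) \<open>s \<notin> T\<close>] by simp
    also have "\<dots> \<le> x s"
      using exp_rew_upto_le_superharmonic[OF assms(2,5) \<open>s \<notin> T\<close>]
      by (rule SUP_least)
    finally show ?thesis .
  qed
qed

end
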